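(* Let $m\ge2$ be an integer, $t\ge0$, $\lambda>0$, $s=\frac{t}{2\lambda}$, and consider searching on $m$ rays with turn cost $t$ and lower bound $\lambda$. (i) If $s\le\frac{1}{(\frac{m}{m-1})^{m-1}-1}$, the cyclic strategy with distances $$x_i=\left(\left(\frac{1}{m-1}\Big(1-\Big(\big(\tfrac{m}{m-1}\big)^{m-1}-1\Big)s\Big)\,i+(1+s)\right)\Big(\frac{m}{m-1}\Big)^i-s\right)\lambda$$ is optimal and has competitive ratio $1+2\frac{m^m}{(m-1)^{m-1}}$. (ii) If $s\ge\frac{1}{(\frac{m}{m-1})^{m-1}-1}$, the cyclic strategy with distances $$x_i=\Big((1+s)\big(1+s^{-1}\big)^{\frac{i}{m-1}}-s\Big)\lambda$$ has competitive ratio $$\frac{\big(1+s^{-1}\big)^{-\frac{1}{m-1}}-\big(3+2s^{-1}\big)}{\big(1+s^{-1}\big)^{-\frac{1}{m-1}}-1}.$$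
   Context: Searching on $m$ rays with turn cost. Fix $\lambda>0$, $t\ge0$. A search strategy is a sequence $(x_i,r_i)_{i\ge1}$ with $x_i>0$, $r_i\in\{1,\dots,m\}$ (the $m$ rays emanating from the origin), such that $\sup\{x_i:r_i=r\}=\infty$ for every ray $r$. At step $i$ the searcher walks distance $x_i$ from the origin along ray $r_i$ and, if the target is not found, walks back to the origin, paying an extra turn cost $t$; so each unsuccessful step costs $2x_i+t$. The target lies on one ray at unknown distance $D\ge\lambda$ and is found at the first step $j$ with $r_j$ equal to its ray and $x_j\ge D$; the total cost is then $\sum_{i=1}^{j-1}(2x_i+t)+D$. The competitive ratio is the supremum over all target positions of total cost divided by $D$; a strategy is optimal if its competitive ratio is minimal among all strategies. A cyclic strategy with distances $x_i$ visits the rays in round-robin order, $r_i\equiv i \pmod m$; for increasing distances its competitive ratio equals $\max\Big\{\frac{\sum_{i=1}^{m-1}(2x_i+t)+\lambda}{\lambda},\ \sup_{n\ge1}\frac{\sum_{i=1}^{n+m-1}(2x_i+t)+x_n}{x_n}\Big\}$. *)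

theory Defs
  imports "HOL-Analysis.Analysis"
begin

text \<open>A strategy is a pair of sequences (x, r) indexed from 1 (values at index 0 are ignored):
  step i walks distance x i along ray r i.\<close>

definition valid_strategy :: "nat \<Rightarrow> (nat \<Rightarrow> real) \<Rightarrow> (nat \<Rightarrow> nat) \<Rightarrow> bool" where
  "valid_strategy m x r \<longleftrightarrow>
     (\<forall>i\<ge>1. x i > 0 \<and> r i \<in> {1..m}) \<and>
     (\<forall>\<rho>\<in>{1..m}. \<not> bdd_above {x i | i. i \<ge> 1 \<and> r i = \<rho>})"

definition find_step :: "(nat \<Rightarrow> real) \<Rightarrow> (nat \<Rightarrow> nat) \<Rightarrow> nat \<Rightarrow> real \<Rightarrow> nat" where
  "find_step x r \<rho> D = (LEAST j. j \<ge> 1 \<and> r j = \<rho> \<and> x j \<ge> D)"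

definition search_cost :: "real \<Rightarrow> (nat \<Rightarrow> real) \<Rightarrow> (nat \<Rightarrow> nat) \<Rightarrow> nat \<Rightarrow> real \<Rightarrow> real" where
  "search_cost t x r \<rho> D = (\<Sum>i\<in>{1..<find_step x r \<rho> D}. 2 * x i + t) + D"

definition comp_ratio :: "nat \<Rightarrow> real \<Rightarrow> real \<Rightarrow> (nat \<Rightarrow> real) \<Rightarrow> (nat \<Rightarrow> nat) \<Rightarrow> ereal" where
  "comp_ratio m t lam x r =
     (SUP p \<in> {(\<rho>, D). \<rho> \<in> {1..m} \<and> D \<ge> lam}. ereal (search_cost t x r (fst p) (snd p) / snd p))"

definition optimal_strategy :: "nat \<Rightarrow> real \<Rightarrow> real \<Rightarrow> (nat \<Rightarrow> real) \<Rightarrow> (nat \<Rightarrow> nat) \<Rightarrow> bool" where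
  "optimal_strategy m t lam x r \<longleftrightarrow> valid_strategy m x r \<and>
     (\<forall>x' r'. valid_strategy m x' r' \<longrightarrow> comp_ratio m t lam x r \<le> comp_ratio m t lam x' r')"

definition cyclic_rays :: "nat \<Rightarrow> nat \<Rightarrow> nat" where
  "cyclic_rays m i = (i - 1) mod m + 1"

end

theory Submission
  imports Defs "HOL-Library.Infinite_Set"
begin

text \<open>
  Upper bounds: if a cyclic strategy with \<open>x 0 = lam\<close> satisfies
  \<open>(\<Sum>i\<in>{1..<n + m}. 2 * x i + t) = (R - 1) * x n\<close> for all \<open>n\<close>, its competitive ratio is
  exactly \<open>R\<close>: a target missed at step \<open>n\<close> is found at step \<open>n + m\<close>, and the worst target
  lies just beyond \<open>x n\<close>. For both strategies of the theorem this identity telescopes to the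
  linear recurrence \<open>2 x (n + m) + t = (R - 1) (x (n + 1) - x n)\<close> plus its initial instance.

  Lower bound (Gal's argument): keep only the record steps of an arbitrary strategy, those
  that go farther on their ray than every earlier step on it. With record distances \<open>z\<close>,
  partial sums \<open>T j = \<Sum>l<j. z l\<close> and competitive ratio \<open>C\<close>, a target just beyond
  \<open>z k\<close> forces \<open>T k' \<le> a z k\<close>, where \<open>a = (C - 1) / 2\<close> and \<open>k'\<close> is the next record on
  the same ray. Summing these over a window of records gives a positive increasing
  \<open>u\<close> with \<open>u (n + m) \<le> a (u (n + 1) - u n)\<close>; the infimum \<open>\<mu>\<close> of its growth ratios then
  satisfies \<open>\<mu>^m \<le> a (\<mu> - 1)\<close>, and minimising \<open>\<mu>^m / (\<mu> - 1)\<close> gives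
  \<open>a \<ge> m (m / (m - 1))^(m - 1)\<close>.
\<close>

lemma cyclic_rays_add_mult:
  assumes "1 \<le> \<rho>" "\<rho> \<le> m"
  shows "cyclic_rays m (\<rho> + m * k) = \<rho>"
proof -
  have "\<rho> + m * k - 1 = (\<rho> - 1) + m * k" using assms by simp
  then have "(\<rho> + m * k - 1) mod m = (\<rho> - 1) mod m" by simp
  then show ?thesis using assms unfolding cyclic_rays_def by simp
qed

lemma cyclic_rays_diff:
  assumes "m < j"
  shows "cyclic_rays m (j - m) = cyclic_rays m j"
proof -
  have "j - 1 = (j - m - 1) + m" using assms by simp
  then show ?thesis unfolding cyclic_rays_def by (metis mod_add_self2)
qed

lemma cyclic_rays_in_rays: "m \<ge> 1 \<Longrightarrow> cyclic_rays m j \<in> {1..m}"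
  unfolding cyclic_rays_def by (simp add: Suc_leI)

lemma sum_telescope_cyclic:
  fixes f g :: "nat \<Rightarrow> 'a::ab_group_add"
  assumes "m \<ge> 1" and "(\<Sum>i\<in>{1..<m}. f i) = g 0" and "\<And>n. f (n + m) = g (Suc n) - g n"
  shows "(\<Sum>i\<in>{1..<n + m}. f i) = g n"
proof (induction n)
  case (Suc n)
  have "{1..<Suc n + m} = insert (n + m) {1..<n + m}" using assms(1) by auto
  then show ?case using Suc assms(3)[of n] by simp
qed (use assms(2) in simp)

lemma sum_arith_geom:
  fixes q \<alpha> \<beta> u v :: real
  assumes "u * (q - 1) = \<alpha>" and "v * (q - 1) + u = \<beta>"
  shows "(\<Sum>i=1..N. (\<alpha> * real i + \<beta>) * q ^ i) = (u * real N + v) * q ^ Suc N - v * q"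
proof (induction N)
  case (Suc N)
  then show ?case unfolding assms(1)[symmetric] assms(2)[symmetric]
    by (simp add: algebra_simps)
qed simp

lemma geometric_minorant:
  fixes x :: "nat \<Rightarrow> real"
  assumes "b > 1" and "c > 0" and "\<And>i. c * b ^ i \<le> x i"
  shows "c \<le> x i" and "filterlim x at_top sequentially"
proof -
  have "c * 1 \<le> c * b ^ i" using assms(1,2) by (intro mult_left_mono) simp_all
  then show "c \<le> x i" using assms(3)[of i] by simp
next
  show "filterlim x at_top sequentially"
  proof (rule filterlim_at_top_mono)
    have "filterlim (\<lambda>i. norm (b ^ i)) at_top sequentially"
      using filterlim_realpow_sequentially_gt1[of b] assms(1)
      by (simp add: filterlim_at_infinity_conv_norm_at_top)
    then have "filterlim (\<lambda>i. b ^ i) at_top sequentially"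
      using assms(1) by (simp add: norm_power)
    then show "filterlim (\<lambda>i. c * b ^ i) at_top sequentially"
      using assms(2) by (intro filterlim_tendsto_pos_mult_at_top[OF tendsto_const])
  qed (use assms(3) in auto)
qed

lemma valid_strategyD:
  assumes "valid_strategy m x r" and "i \<ge> 1"
  shows "x i > 0" and "r i \<in> {1..m}"
  using assms unfolding valid_strategy_def by simp_all

lemma valid_strategy_unbounded:
  assumes "valid_strategy m x r" and "\<rho> \<in> {1..m}"
  shows "\<exists>i\<ge>1. r i = \<rho> \<and> V < x i"
proof -
  have "\<not> bdd_above {x i | i. i \<ge> 1 \<and> r i = \<rho>}" using assms unfolding valid_strategy_def by blast
  then show ?thesis unfolding bdd_above_def by (auto simp: not_le)
qed

context
  fixes m :: nat and x :: "nat \<Rightarrow> real" and r :: "nat \<Rightarrow> nat" and \<rho> :: nat and D :: real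
  assumes valid: "valid_strategy m x r" and ray: "\<rho> \<in> {1..m}"
begin

lemma find_step_found:
  "find_step x r \<rho> D \<ge> 1" "r (find_step x r \<rho> D) = \<rho>" "D \<le> x (find_step x r \<rho> D)"
proof -
  have "\<exists>i. i \<ge> 1 \<and> r i = \<rho> \<and> D \<le> x i"
    using valid_strategy_unbounded[OF valid ray, of D] by force
  from LeastI_ex[OF this] show "find_step x r \<rho> D \<ge> 1" "r (find_step x r \<rho> D) = \<rho>"
    "D \<le> x (find_step x r \<rho> D)"
    unfolding find_step_def by auto
qed

lemma find_step_least:
  assumes "1 \<le> i" and "i < find_step x r \<rho> D" and "r i = \<rho>"
  shows "x i < D"
  using not_less_Least[of i "\<lambda>i. i \<ge> 1 \<and> r i = \<rho> \<and> D \<le> x i"] assms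
  unfolding find_step_def by auto

end

lemma cyclic_rays_unbounded:
  fixes x :: "nat \<Rightarrow> real"
  assumes "m \<ge> 1" and "\<rho> \<in> {1..m}" and "filterlim x at_top sequentially"
  shows "\<exists>i\<ge>1. cyclic_rays m i = \<rho> \<and> V < x i"
proof -
  obtain N where N: "\<And>i. i \<ge> N \<Longrightarrow> V < x i"
    using assms(3) by (auto simp: filterlim_at_top_dense eventually_sequentially)
  have "cyclic_rays m (\<rho> + m * N) = \<rho>" using assms(2) by (simp add: cyclic_rays_add_mult)
  moreover have "N \<le> \<rho> + m * N" using assms(1) by (simp add: trans_le_add2)
  ultimately show ?thesis using N assms(2) by (intro exI[of _ "\<rho> + m * N"]) auto
qed

lemma valid_cyclic_strategy:
  fixes x :: "nat \<Rightarrow> real"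
  assumes "m \<ge> 1" and "\<And>i. x i > 0" and "filterlim x at_top sequentially"
  shows "valid_strategy m x (cyclic_rays m)"
proof -
  have "\<not> bdd_above {x i | i. i \<ge> 1 \<and> cyclic_rays m i = \<rho>}" if "\<rho> \<in> {1..m}" for \<rho>
    using cyclic_rays_unbounded[OF assms(1) that assms(3)]
    unfolding bdd_above_def by (metis (mono_tags, lifting) mem_Collect_eq not_le)
  then show ?thesis
    unfolding valid_strategy_def using assms(1,2) cyclic_rays_in_rays by auto
qed

text \<open>The convention \<open>x 0 = lam\<close> lets the identity at \<open>n = 0\<close> cover the targets found
  during the first round.\<close>

context
  fixes m :: nat and t lam R :: real and x :: "nat \<Rightarrow> real"
  assumes m: "m \<ge> 1" and t: "t \<ge> 0" and lam: "lam > 0"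
    and x0: "x 0 = lam" and x_ge: "\<And>i. lam \<le> x i" and x_lim: "filterlim x at_top sequentially"
    and cost_identity: "\<And>n. (\<Sum>i\<in>{1..<n + m}. 2 * x i + t) = (R - 1) * x n"
begin

lemma cyclic_step_cost_nonneg: "0 \<le> 2 * x i + t"
  using x_ge[of i] lam t by linarith

lemma cyclic_ratio_ge_1: "R \<ge> 1"
proof -
  have "0 \<le> (\<Sum>i\<in>{1..<0 + m}. 2 * x i + t)"
    by (intro sum_nonneg cyclic_step_cost_nonneg)
  then show ?thesis using cost_identity[of 0] x0 lam by (simp add: zero_le_mult_iff)
qed

lemma cyclic_strategy_valid: "valid_strategy m x (cyclic_rays m)"
  using valid_cyclic_strategy[OF m _ x_lim] x_ge lam by (meson less_le_trans)

lemma search_cost_cyclic_le: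
  assumes \<rho>: "\<rho> \<in> {1..m}" and D: "lam \<le> D"
  shows "search_cost t x (cyclic_rays m) \<rho> D \<le> R * D"
proof -
  define j where "j = find_step x (cyclic_rays m) \<rho> D"
  note found = find_step_found[OF cyclic_strategy_valid \<rho>, of D, folded j_def]
  have "(\<Sum>i\<in>{1..<j}. 2 * x i + t) \<le> (R - 1) * D"
  proof (cases "j \<le> m")
    case True
    have "(\<Sum>i\<in>{1..<j}. 2 * x i + t) \<le> (\<Sum>i\<in>{1..<0 + m}. 2 * x i + t)"
      using True cyclic_step_cost_nonneg by (intro sum_mono2) auto
    also have "\<dots> = (R - 1) * lam" using cost_identity[of 0] x0 by simp
    also have "\<dots> \<le> (R - 1) * D" using cyclic_ratio_ge_1 D by (simp add: mult_left_mono)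
    finally show ?thesis .
  next
    case False
    then have j: "j = (j - m) + m" by simp
    have "cyclic_rays m (j - m) = \<rho>" using False found(2) by (simp add: cyclic_rays_diff)
    then have "x (j - m) < D"
      using False m by (intro find_step_least[OF cyclic_strategy_valid \<rho>]) (auto simp: j_def)
    then have "(R - 1) * x (j - m) \<le> (R - 1) * D" using cyclic_ratio_ge_1 by (simp add: mult_left_mono)
    then show ?thesis using cost_identity[of "j - m"] j by simp
  qed
  then show ?thesis unfolding search_cost_def j_def[symmetric] by (simp add: algebra_simps)
qed

lemma find_step_cyclic_last_ray: "find_step x (cyclic_rays m) m lam = m"
  unfolding find_step_def
proof (rule Least_equality)
  show "1 \<le> m \<and> cyclic_rays m m = m \<and> lam \<le> x m"
    using m x_ge cyclic_rays_add_mult[of m m 0] by simp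
  show "m \<le> j" if "1 \<le> j \<and> cyclic_rays m j = m \<and> lam \<le> x j" for j
    using that cyclic_rays_add_mult[of j m 0] by (metis add.right_neutral mult_0_right not_le order_less_imp_le)
qed

lemma comp_ratio_cyclic: "comp_ratio m t lam x (cyclic_rays m) = ereal R"
  unfolding comp_ratio_def
proof (rule antisym)
  show "(SUP p\<in>{(\<rho>, D). \<rho> \<in> {1..m} \<and> lam \<le> D}.
          ereal (search_cost t x (cyclic_rays m) (fst p) (snd p) / snd p)) \<le> ereal R"
    using search_cost_cyclic_le lam by (intro SUP_least) (auto simp: divide_le_eq)
  have "search_cost t x (cyclic_rays m) m lam = R * lam"
    unfolding search_cost_def find_step_cyclic_last_ray
    using cost_identity[of 0] x0 by (simp add: algebra_simps)
  then show "ereal R \<le> (SUP p\<in>{(\<rho>, D). \<rho> \<in> {1..m} \<and> lam \<le> D}.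
          ereal (search_cost t x (cyclic_rays m) (fst p) (snd p) / snd p))"
    using m lam by (intro SUP_upper2[of "(m, lam)"]) auto
qed

end

lemma cyclic_geometric_strategy:
  fixes b s lam :: real
  assumes m: "m \<ge> 2" and lam: "lam > 0" and s: "s > 0" and b: "b > 1"
    and b_pow: "b ^ (m - 1) = 1 + 1 / s"
  defines "x \<equiv> \<lambda>i. ((1 + s) * b ^ i - s) * lam"
  shows "valid_strategy m x (cyclic_rays m)"
    and "comp_ratio m (2 * s * lam) lam x (cyclic_rays m) = ereal (1 + 2 * b ^ m / (b - 1))"
proof -
  have m_Suc: "m = Suc (m - 1)" using m by simp
  have b_pow_m: "b ^ m = b * (1 + 1 / s)" using b_pow by (metis m_Suc power_Suc)
  have lower: "lam * b ^ i \<le> x i" for i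
  proof -
    have "s * 1 \<le> s * b ^ i" using s b by (intro mult_left_mono) auto
    then show ?thesis unfolding x_def using lam by (simp add: algebra_simps)
  qed
  note x_ge = geometric_minorant(1)[OF b lam lower] and x_lim = geometric_minorant(2)[OF b lam lower]
  have gp: "(1 + s) * (\<Sum>i\<in>{1..<m}. b ^ i) = b ^ m / (b - 1)"
  proof -
    have "{1..<m} = {1..m - 1}" using m by auto
    then have "(b - 1) * (\<Sum>i\<in>{1..<m}. b ^ i) = b ^ m - b"
      using sum_gp_multiplied[of 1 "m - 1" b] m by (simp flip: m_Suc add: algebra_simps)
    then have "(1 + s) * (\<Sum>i\<in>{1..<m}. b ^ i) * (b - 1) = (1 + s) * (b ^ m - b)"
      by (metis mult.commute mult.left_commute)
    also have "\<dots> = b ^ m" using b_pow_m s by (simp add: field_simps)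
    finally show ?thesis using b by (simp add: field_simps)
  qed
  have step_cost: "2 * x i + 2 * s * lam = 2 * lam * ((1 + s) * b ^ i)" for i
    unfolding x_def by (simp add: algebra_simps)
  have identity: "(\<Sum>i\<in>{1..<n + m}. 2 * x i + 2 * s * lam) = (1 + 2 * b ^ m / (b - 1) - 1) * x n" for n
  proof (rule sum_telescope_cyclic)
    have "(\<Sum>i\<in>{1..<m}. 2 * x i + 2 * s * lam) = 2 * lam * ((1 + s) * (\<Sum>i\<in>{1..<m}. b ^ i))"
      by (simp add: step_cost sum_distrib_left)
    then show "(\<Sum>i\<in>{1..<m}. 2 * x i + 2 * s * lam) = (1 + 2 * b ^ m / (b - 1) - 1) * x 0"
      unfolding gp by (simp add: x_def)
    show "2 * x (n + m) + 2 * s * lam = (1 + 2 * b ^ m / (b - 1) - 1) * x (Suc n) - (1 + 2 * b ^ m / (b - 1) - 1) * x n" for n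
    proof -
      have "x (Suc n) - x n = (1 + s) * b ^ n * (b - 1) * lam" by (simp add: x_def algebra_simps)
      then have "2 * b ^ m / (b - 1) * (x (Suc n) - x n) = 2 * lam * ((1 + s) * b ^ (n + m))"
        using b by (simp add: power_add)
      then show ?thesis unfolding step_cost by (simp add: right_diff_distrib)
    qed
  qed (use m in simp)
  have x0: "x 0 = lam" unfolding x_def by simp
  have pos: "2 * s * lam \<ge> 0" using s lam by simp
  show "valid_strategy m x (cyclic_rays m)"
    using cyclic_strategy_valid[OF _ pos lam x0 x_ge x_lim identity] m by simp
  show "comp_ratio m (2 * s * lam) lam x (cyclic_rays m) = ereal (1 + 2 * b ^ m / (b - 1))"
    using comp_ratio_cyclic[OF _ pos lam x0 x_ge x_lim identity] m by simp
qed

lemma linear_geometric_recurrence: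
  fixes q M \<alpha> \<beta> y :: real
  assumes "q * (M - 1) = M"
  shows "M * ((\<alpha> * (y + 1) + \<beta>) * q - (\<alpha> * y + \<beta>)) = (\<alpha> * (y + M) + \<beta>) * q"
proof -
  have "M * ((\<alpha> * (y + 1) + \<beta>) * q - (\<alpha> * y + \<beta>))
      = M * (\<alpha> * (y + 1) + \<beta>) * q - q * (M - 1) * (\<alpha> * y + \<beta>)"
    unfolding assms by (simp add: algebra_simps)
  also have "\<dots> = (\<alpha> * (y + M) + \<beta>) * q" by (simp add: algebra_simps)
  finally show ?thesis .
qed

lemma linear_geometric_initial_sum:
  fixes m :: nat and \<alpha> s :: real
  defines "q \<equiv> real m / (real m - 1)"
  assumes m: "m \<ge> 2" and \<alpha>_eq: "\<alpha> * (real m - 1) = 1 - (q ^ (m - 1) - 1) * s"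
  shows "(\<Sum>i\<in>{1..<m}. (\<alpha> * real i + (1 + s)) * q ^ i) = real m * q ^ (m - 1)"
proof -
  define M where "M = real m"
  define p where "p = q ^ (m - 1)"
  define u where "u = \<alpha> * (M - 1)"
  define v where "v = (1 + s - u) * (M - 1)"
  have M1: "M - 1 > 0" using m unfolding M_def by simp
  have qM: "q * (M - 1) = M" unfolding q_def M_def using M1 M_def by simp
  have "(M - 1) * (q - 1) = 1" using qM by (simp add: algebra_simps)
  then have coeffs: "u * (q - 1) = \<alpha>" "v * (q - 1) + u = 1 + s"
    unfolding u_def v_def by (simp_all add: mult.assoc)
  have "{1..<m} = {1..m - 1}" using m by auto
  then have "(\<Sum>i\<in>{1..<m}. (\<alpha> * real i + (1 + s)) * q ^ i)
      = (u * real (m - 1) + v) * q ^ Suc (m - 1) - v * q"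
    using sum_arith_geom[OF coeffs, of "m - 1"] by simp
  also have "\<dots> = (u * (M - 1) + v) * (q * p) - v * q"
    using m power_minus_mult[of m q] by (simp add: M_def p_def mult.commute)
  also have "\<dots> = M * ((1 + s) * p - (1 + s - u))"
  proof -
    have "u * (M - 1) + v = (1 + s) * (M - 1)" unfolding v_def by (simp add: algebra_simps)
    moreover have "v * q = (1 + s - u) * M" unfolding v_def using qM by (simp add: ac_simps)
    ultimately have "(u * (M - 1) + v) * (q * p) - v * q = (1 + s) * p * (q * (M - 1)) - (1 + s - u) * M"
      by (simp add: ac_simps)
    then show ?thesis unfolding qM by (simp add: algebra_simps)
  qed
  also have "(1 + s) * p - (1 + s - u) = p"
    using \<alpha>_eq unfolding u_def M_def p_def by (simp add: algebra_simps)
  finally show ?thesis unfolding M_def p_def .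
qed

lemma cyclic_linear_geometric_strategy:
  fixes m :: nat and \<alpha> s lam :: real
  defines "q \<equiv> real m / (real m - 1)"
  assumes m: "m \<ge> 2" and lam: "lam > 0" and s: "s \<ge> 0" and \<alpha>: "\<alpha> \<ge> 0"
    and \<alpha>_eq: "\<alpha> * (real m - 1) = 1 - (q ^ (m - 1) - 1) * s"
  defines "x \<equiv> \<lambda>i. ((\<alpha> * real i + (1 + s)) * q ^ i - s) * lam"
  shows "valid_strategy m x (cyclic_rays m)"
    and "comp_ratio m (2 * s * lam) lam x (cyclic_rays m) = ereal (1 + 2 * real m * q ^ (m - 1))"
proof -
  define M where "M = real m"
  define p where "p = q ^ (m - 1)"
  have M1: "M - 1 > 0" using m unfolding M_def by simp
  have qM: "q * (M - 1) = M" unfolding q_def M_def using M1 M_def by simp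
  have q1: "q > 1" unfolding q_def using M1 M_def by simp
  have q_pow_m: "q ^ m = q * p"
    unfolding p_def using power_minus_mult[of m q] m by (simp add: mult.commute)
  have lower: "lam * q ^ i \<le> x i" for i
  proof -
    have "1 \<le> q ^ i" using q1 by simp
    then have "s \<le> s * q ^ i" using s mult_left_mono[of 1 "q ^ i" s] by simp
    moreover have "0 \<le> \<alpha> * real i * q ^ i" using \<alpha> q1 by simp
    ultimately have "q ^ i \<le> (\<alpha> * real i + (1 + s)) * q ^ i - s" by (simp add: algebra_simps)
    then show ?thesis unfolding x_def using lam by (simp add: mult.commute mult_left_mono)
  qed
  note x_ge = geometric_minorant(1)[OF q1 lam lower] and x_lim = geometric_minorant(2)[OF q1 lam lower]
  have step_cost: "2 * x i + 2 * s * lam = 2 * lam * ((\<alpha> * real i + (1 + s)) * q ^ i)" for i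
    unfolding x_def by (simp add: algebra_simps)
  have base: "(\<Sum>i\<in>{1..<m}. (\<alpha> * real i + (1 + s)) * q ^ i) = M * p"
    using linear_geometric_initial_sum[OF m \<alpha>_eq[unfolded q_def]] unfolding M_def p_def q_def .
  have identity: "(\<Sum>i\<in>{1..<n + m}. 2 * x i + 2 * s * lam) = (1 + 2 * M * p - 1) * x n" for n
  proof (rule sum_telescope_cyclic)
    show "(\<Sum>i\<in>{1..<m}. 2 * x i + 2 * s * lam) = (1 + 2 * M * p - 1) * x 0"
      unfolding step_cost sum_distrib_left[symmetric] base by (simp add: x_def)
    show "2 * x (n + m) + 2 * s * lam = (1 + 2 * M * p - 1) * x (Suc n) - (1 + 2 * M * p - 1) * x n" for n
    proof -
      have recurrence: "M * ((\<alpha> * real (Suc n) + (1 + s)) * q - (\<alpha> * real n + (1 + s)))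
          = (\<alpha> * real (n + m) + (1 + s)) * q"
        using linear_geometric_recurrence[OF qM, of \<alpha> "real n" "1 + s"] unfolding M_def
        by (simp add: add.commute)
      have "x (Suc n) - x n = lam * q ^ n * ((\<alpha> * real (Suc n) + (1 + s)) * q - (\<alpha> * real n + (1 + s)))"
        unfolding x_def by (simp add: algebra_simps)
      then have "M * p * (x (Suc n) - x n) = lam * q ^ n * p * ((\<alpha> * real (n + m) + (1 + s)) * q)"
        unfolding recurrence[symmetric] by (simp add: ac_simps)
      also have "\<dots> = lam * ((\<alpha> * real (n + m) + (1 + s)) * q ^ (n + m))"
        by (simp add: power_add q_pow_m ac_simps)
      finally show ?thesis unfolding step_cost by (simp add: algebra_simps)
    qed
  qed (use m in simp)
  have x0: "x 0 = lam" unfolding x_def by simp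
  have pos: "2 * s * lam \<ge> 0" using s lam by simp
  show "valid_strategy m x (cyclic_rays m)"
    using cyclic_strategy_valid[OF _ pos lam x0 x_ge x_lim identity] m by simp
  show "comp_ratio m (2 * s * lam) lam x (cyclic_rays m) = ereal (1 + 2 * real m * q ^ (m - 1))"
    using comp_ratio_cyclic[OF _ pos lam x0 x_ge x_lim identity] m by (simp add: M_def p_def)
qed

text \<open>The left-hand side is the tangent to \<open>\<mu>^m\<close> at \<open>m / (m - 1)\<close>, which passes
  through \<open>(1, 0)\<close>.\<close>

lemma power_ge_tangent:
  fixes \<mu> :: real
  assumes m: "m \<ge> 2" and \<mu>: "\<mu> \<ge> 0"
  shows "real m * (real m / (real m - 1)) ^ (m - 1) * (\<mu> - 1) \<le> \<mu> ^ m"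
proof -
  define q where "q = real m / (real m - 1)"
  have q: "q > 0" "q * (real m - 1) = real m" unfolding q_def using m by auto
  have q_pow: "q ^ m = q ^ (m - 1) * q" using power_minus_mult[of m q] m by simp
  have "q ^ m * (1 + real m * (\<mu> / q - 1)) \<le> q ^ m * (\<mu> / q) ^ m"
    using Bernoulli_inequality[of "\<mu> / q - 1" m] q \<mu> by (intro mult_left_mono) simp_all
  also have "\<dots> = \<mu> ^ m" using q by (simp add: power_divide)
  also have "q ^ m * (1 + real m * (\<mu> / q - 1)) = real m * q ^ (m - 1) * (\<mu> - 1)"
    unfolding q_pow using q by (simp add: field_simps)
  finally show ?thesis unfolding q_def .
qed

lemma growth_ratio_improves:
  fixes u :: "nat \<Rightarrow> real"
  assumes m: "m \<ge> 1" and pos: "\<And>n. u n > 0" and inc: "\<And>n. u n < u (Suc n)"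
    and growth: "\<And>n. u (n + m) \<le> a * (u (Suc n) - u n)"
    and \<mu>: "\<mu> \<ge> 0" and ratio: "\<And>n. \<mu> * u n \<le> u (Suc n)"
  shows "a > \<mu> ^ (m - 1)" and "a * u n \<le> (a - \<mu> ^ (m - 1)) * u (Suc n)"
proof -
  have power_growth: "\<mu> ^ k * u n \<le> u (n + k)" for n k
  proof (induction k)
    case (Suc k)
    have "\<mu> ^ Suc k * u n = \<mu> * (\<mu> ^ k * u n)" by simp
    also have "\<dots> \<le> \<mu> * u (n + k)" using Suc \<mu> by (simp add: mult_left_mono)
    also have "\<dots> \<le> u (n + Suc k)" using ratio by simp
    finally show ?case .
  qed simp
  have improved: "a * u n \<le> (a - \<mu> ^ (m - 1)) * u (Suc n)" for n
  proof -
    have "\<mu> ^ (m - 1) * u (Suc n) \<le> u (Suc n + (m - 1))" by (rule power_growth)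
    also have "\<dots> \<le> a * (u (Suc n) - u n)" using growth[of n] m by simp
    finally show ?thesis by (simp add: algebra_simps)
  qed
  then show "a * u n \<le> (a - \<mu> ^ (m - 1)) * u (Suc n)" .
  have "0 < u m" by (rule pos)
  also have "\<dots> \<le> a * (u 1 - u 0)" using growth[of 0] by simp
  finally have "a > 0" using inc[of 0] by (simp add: zero_less_mult_iff)
  then have "0 < a * u 0" using pos[of 0] by simp
  also have "\<dots> \<le> (a - \<mu> ^ (m - 1)) * u 1" using improved[of 0] by simp
  finally have "0 < (a - \<mu> ^ (m - 1)) * u 1" .
  then show "a > \<mu> ^ (m - 1)" using pos[of 1] by (simp add: zero_less_mult_iff)
qed

lemma growth_inequality_lower_bound:
  fixes u :: "nat \<Rightarrow> real"
  assumes m: "m \<ge> 2" and pos: "\<And>n. u n > 0" and inc: "\<And>n. u n < u (Suc n)"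
    and growth: "\<And>n. u (n + m) \<le> a * (u (Suc n) - u n)"
  shows "real m * (real m / (real m - 1)) ^ (m - 1) \<le> a"
proof -
  define \<mu> where "\<mu> = (INF n. u (Suc n) / u n)"
  have ratio_gt_1: "u (Suc n) / u n > 1" for n using pos inc by simp
  have bdd: "bdd_below (range (\<lambda>n. u (Suc n) / u n))"
    using ratio_gt_1 by (intro bdd_belowI2[of _ 1]) (simp add: less_imp_le)
  have \<mu>_le: "\<mu> \<le> u (Suc n) / u n" for n unfolding \<mu>_def by (rule cINF_lower[OF bdd]) simp
  have \<mu>_ge_1: "\<mu> \<ge> 1" unfolding \<mu>_def using ratio_gt_1 by (intro cINF_greatest) (auto simp: less_imp_le)
  have ratio: "\<mu> * u n \<le> u (Suc n)" for n using \<mu>_le[of n] pos[of n] by (simp add: field_simps)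
  have improves: "a > \<mu> ^ (m - 1)" "\<And>n. a * u n \<le> (a - \<mu> ^ (m - 1)) * u (Suc n)"
    using growth_ratio_improves[of m u a \<mu>] m pos inc growth \<mu>_ge_1 ratio by auto
  have "a / (a - \<mu> ^ (m - 1)) \<le> u (Suc n) / u n" for n
    using improves pos[of n] pos[of "Suc n"] by (simp add: field_simps)
  then have "a / (a - \<mu> ^ (m - 1)) \<le> \<mu>" unfolding \<mu>_def by (intro cINF_greatest) auto
  then have "\<mu> * \<mu> ^ (m - 1) \<le> a * (\<mu> - 1)" using improves by (simp add: field_simps)
  also have "\<mu> * \<mu> ^ (m - 1) = \<mu> ^ m" using power_minus_mult[of m \<mu>] m by (simp add: mult.commute)
  finally have tangent: "\<mu> ^ m \<le> a * (\<mu> - 1)" .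
  then have "\<mu> > 1" using \<mu>_ge_1 by (cases "\<mu> = 1") simp_all
  have "real m * (real m / (real m - 1)) ^ (m - 1) * (\<mu> - 1) \<le> a * (\<mu> - 1)"
    using order_trans[OF power_ge_tangent[OF m] tangent] \<mu>_ge_1 by simp
  then show ?thesis using \<open>\<mu> > 1\<close> by simp
qed

lemma sum_consecutive_le_sum:
  fixes f :: "nat \<Rightarrow> real"
  assumes mono: "mono f"
  shows "finite B \<Longrightarrow> B \<subseteq> {n<..} \<Longrightarrow> card B = k \<Longrightarrow> (\<Sum>j\<in>{n<..n + k}. f j) \<le> sum f B"
proof (induction k arbitrary: B)
  case (Suc k)
  define b where "b = Max B"
  have b: "b \<in> B" "\<And>j. j \<in> B \<Longrightarrow> j \<le> b"
    using Suc.prems b_def by (auto intro: Max_in Max_ge)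
  have "B \<subseteq> {n<..b}" using Suc.prems b by auto
  then have "Suc k \<le> card {n<..b}" using card_mono[of "{n<..b}" B] Suc.prems by simp
  then have "n + Suc k \<le> b" by simp
  moreover have "{n<..n + Suc k} = insert (n + Suc k) {n<..n + k}" by auto
  ultimately have "(\<Sum>j\<in>{n<..n + Suc k}. f j) \<le> (\<Sum>j\<in>{n<..n + k}. f j) + f b"
    using mono by (simp add: monoD)
  also have "(\<Sum>j\<in>{n<..n + k}. f j) \<le> sum f (B - {b})"
    using Suc.prems b by (intro Suc.IH) auto
  also have "sum f (B - {b}) + f b = sum f B"
    using Suc.prems b by (simp add: sum.remove)
  finally show ?case by simp
qed simp

definition next_occ :: "(nat \<Rightarrow> 'c) \<Rightarrow> nat \<Rightarrow> nat" where
  "next_occ c k = (LEAST k'. k < k' \<and> c k' = c k)"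

lemma next_occ_eqI:
  assumes "k < j" and "c j = c k" and "\<And>i. k < i \<Longrightarrow> i < j \<Longrightarrow> c i \<noteq> c k"
  shows "next_occ c k = j"
  unfolding next_occ_def using assms by (intro Least_equality) (auto simp: not_less[symmetric])

context
  fixes c :: "nat \<Rightarrow> 'c" and A :: "'c set"
  assumes colours: "\<And>k. c k \<in> A" and recurrent: "\<And>a. a \<in> A \<Longrightarrow> \<exists>\<^sub>\<infinity>k. c k = a"
begin

lemma next_occ: "k < next_occ c k" "c (next_occ c k) = c k"
proof -
  have "\<exists>k'. k < k' \<and> c k' = c k"
    using recurrent[OF colours[of k]] unfolding INFM_nat by blast
  from LeastI_ex[OF this] show "k < next_occ c k" "c (next_occ c k) = c k"
    unfolding next_occ_def by auto
qed

lemma next_occ_least: "k < i \<Longrightarrow> i < next_occ c k \<Longrightarrow> c i \<noteq> c k"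
  unfolding next_occ_def using not_less_Least by blast

lemma inj_next_occ: "inj (next_occ c)"
proof (rule injI)
  fix k k' assume eq: "next_occ c k = next_occ c k'"
  then have "c k = c k'" using next_occ(2)[of k] next_occ(2)[of k'] by simp
  then show "k = k'"
    using eq next_occ(1)[of k] next_occ(1)[of k'] next_occ_least[of k k'] next_occ_least[of k' k]
    by (metis linorder_neqE_nat)
qed

lemma next_occ_image_covers_interval:
  assumes "\<forall>a\<in>A. \<exists>k\<in>{K..<K'}. c k = a"
  shows "{K'..n} \<subseteq> next_occ c ` {K..n}"
proof
  fix j assume j: "j \<in> {K'..n}"
  define P where "P = {k \<in> {K..<j}. c k = c j}"
  have "P \<noteq> {}" using assms colours[of j] j unfolding P_def by fastforce
  then have last: "Max P \<in> P" "\<And>k. k \<in> P \<Longrightarrow> k \<le> Max P"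
    using Max_in[of P] Max_ge[of P] unfolding P_def by auto
  have "next_occ c (Max P) = j"
  proof (rule next_occ_eqI)
    show "Max P < j" "c j = c (Max P)" using last(1) unfolding P_def by auto
    show "c i \<noteq> c (Max P)" if "Max P < i" "i < j" for i
    proof
      assume "c i = c (Max P)"
      then have "i \<in> P" using last(1) that unfolding P_def by auto
      then show False using last(2)[of i] that(1) by simp
    qed
  qed
  moreover have "Max P \<in> {K..n}" using last(1) j unfolding P_def by auto
  ultimately show "j \<in> next_occ c ` {K..n}" by blast
qed

lemma card_next_occ_image_beyond:
  assumes "finite A" and "\<forall>a\<in>A. \<exists>k\<in>{K..n}. c k = a"
  shows "card A \<le> card (next_occ c ` {K..n} \<inter> {n<..})"
proof -
  have "A \<subseteq> c ` (next_occ c ` {K..n} \<inter> {n<..})"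
  proof
    fix a assume "a \<in> A"
    define P where "P = {k \<in> {K..n}. c k = a}"
    define k where "k = Max P"
    have "P \<noteq> {}" using assms(2) \<open>a \<in> A\<close> unfolding P_def by blast
    then have k: "k \<in> {K..n}" "c k = a" "\<And>i. i \<in> {K..n} \<Longrightarrow> c i = a \<Longrightarrow> i \<le> k"
      using Max_in[of P] Max_ge[of P] unfolding k_def P_def by auto
    have "n < next_occ c k"
      using k next_occ[of k] by (metis atLeastAtMost_iff le_trans less_imp_le_nat not_le)
    then show "a \<in> c ` (next_occ c ` {K..n} \<inter> {n<..})"
      using k next_occ(2)[of k] by (intro image_eqI[of _ _ "next_occ c k"]) auto
  qed
  then show ?thesis by (meson card_image_le card_mono finite_Int finite_atLeastAtMost finite_imageI order_trans)
qed

end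

text \<open>\<open>next_occ c\<close> maps \<open>{K..n}\<close> injectively onto a set containing \<open>{K'..n}\<close> and, for
  each colour, an index beyond \<open>n\<close>.\<close>

lemma partial_sums_window_bound:
  fixes z :: "nat \<Rightarrow> real" and c :: "nat \<Rightarrow> 'c"
  assumes colours: "\<And>k. c k \<in> A" and recurrent: "\<And>b. b \<in> A \<Longrightarrow> \<exists>\<^sub>\<infinity>k. c k = b"
    and A: "finite A" "card A = m" and z: "\<And>k. z k \<ge> 0" and a: "a \<ge> 0"
    and bound: "\<And>k. K \<le> k \<Longrightarrow> (\<Sum>l<next_occ c k. z l) \<le> a * z k"
    and covers: "\<forall>b\<in>A. \<exists>k\<in>{K..<K'}. c k = b" and n: "K' \<le> n"
  shows "(\<Sum>j\<in>{K'..n + m}. \<Sum>l<j. z l) \<le> a * (\<Sum>l<Suc n. z l)"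
proof -
  define T where "T j = (\<Sum>l<j. z l)" for j
  have T_mono: "mono T" unfolding T_def mono_def using z by (intro allI impI sum_mono2) auto
  have T_nonneg: "T j \<ge> 0" for j unfolding T_def using z by (simp add: sum_nonneg)
  define N where "N = next_occ c ` {K..n}"
  have "\<forall>b\<in>A. \<exists>k\<in>{K..n}. c k = b"
    using covers n by (meson atLeastAtMost_iff atLeastLessThan_iff less_imp_le_nat order_trans)
  then have "card A \<le> card (N \<inter> {n<..})"
    unfolding N_def by (intro card_next_occ_image_beyond[OF colours recurrent A(1)])
  then obtain B where B: "B \<subseteq> N \<inter> {n<..}" "card B = m" "finite B"
    using A(2) obtain_subset_with_card_n by metis
  have "(\<Sum>j\<in>{K'..n + m}. T j) = (\<Sum>j\<in>{K'..n}. T j) + (\<Sum>j\<in>{n<..n + m}. T j)"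
  proof -
    have "{K'..n + m} = {K'..n} \<union> {n<..n + m}" using n by auto
    then show ?thesis by (simp add: sum.union_disjoint ivl_disj_int)
  qed
  also have "\<dots> \<le> (\<Sum>j\<in>{K'..n}. T j) + sum T B"
    using sum_consecutive_le_sum[OF T_mono] B by simp
  also have "\<dots> = sum T ({K'..n} \<union> B)"
    using B by (intro sum.union_disjoint[symmetric]) auto
  also have "\<dots> \<le> sum T N"
    using next_occ_image_covers_interval[OF colours recurrent covers, of n] B T_nonneg
    unfolding N_def by (intro sum_mono2) auto
  also have "\<dots> = (\<Sum>k\<in>{K..n}. T (next_occ c k))"
    unfolding N_def using inj_next_occ[OF colours recurrent]
    by (simp add: sum.reindex inj_on_subset)
  also have "\<dots> \<le> (\<Sum>k\<in>{K..n}. a * z k)" using bound unfolding T_def by (intro sum_mono) auto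
  also have "\<dots> \<le> a * T (Suc n)"
    unfolding T_def sum_distrib_left[symmetric] using a z by (intro mult_left_mono sum_mono2) auto
  finally show ?thesis unfolding T_def .
qed

lemma partial_sums_next_occ_lower_bound:
  fixes z :: "nat \<Rightarrow> real" and c :: "nat \<Rightarrow> 'c"
  assumes A: "card A = m" and m: "m \<ge> 2"
    and colours: "\<And>k. c k \<in> A" and recurrent: "\<And>b. b \<in> A \<Longrightarrow> \<exists>\<^sub>\<infinity>k. c k = b"
    and z: "\<And>k. z k > 0"
    and bound: "eventually (\<lambda>k. (\<Sum>l<next_occ c k. z l) \<le> a * z k) sequentially"
  shows "real m * (real m / (real m - 1)) ^ (m - 1) \<le> a"
proof -
  have fin: "finite A" using A m card.infinite by fastforce
  define T where "T j = (\<Sum>l<j. z l)" for j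
  obtain K where K: "\<And>k. K \<le> k \<Longrightarrow> T (next_occ c k) \<le> a * z k"
    using bound unfolding T_def eventually_sequentially by blast
  have "z K \<le> T (next_occ c K)"
    unfolding T_def using next_occ(1)[OF colours recurrent, of K] z
    by (intro member_le_sum) (auto intro: less_imp_le)
  then have "1 * z K \<le> a * z K" using K[of K] by simp
  then have a: "a \<ge> 1" using z[of K] by (simp add: mult_le_cancel_right)
  have "\<forall>b\<in>A. \<exists>k. K \<le> k \<and> c k = b" using recurrent unfolding INFM_nat_le by blast
  then obtain f where f: "\<And>b. b \<in> A \<Longrightarrow> K \<le> f b \<and> c (f b) = b" by metis
  define K' where "K' = Suc (Max (insert K (f ` A)))"
  have "f b < K'" if "b \<in> A" for b
    unfolding K'_def using fin that by (intro le_imp_less_Suc Max_ge) auto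
  then have covers: "\<forall>b\<in>A. \<exists>k\<in>{K..<K'}. c k = b" using f by fastforce
  have T_pos: "T j > 0" if "j \<ge> 1" for j
    unfolding T_def using z that by (intro sum_pos) (auto simp: lessThan_empty_iff)
  define u where "u i = (\<Sum>j\<in>{K'..K' + i}. T j)" for i
  have u_Suc: "u (Suc i) = u i + T (Suc (K' + i))" for i unfolding u_def by simp
  have u_pos: "u i > 0" for i
    unfolding u_def using T_pos by (intro sum_pos) (auto simp: K'_def)
  have u_inc: "u i < u (Suc i)" for i using u_Suc T_pos by simp
  have u_growth: "u (i + m) \<le> a * (u (Suc i) - u i)" for i
  proof -
    have "u (i + m) = (\<Sum>j\<in>{K'..(K' + i) + m}. \<Sum>l<j. z l)" unfolding u_def T_def by (simp add: add.assoc)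
    also have "\<dots> \<le> a * T (Suc (K' + i))"
      using partial_sums_window_bound[OF colours recurrent fin A _ _ K[unfolded T_def] covers, of "K' + i"]
        z a unfolding T_def by (simp add: less_imp_le)
    finally show ?thesis using u_Suc by simp
  qed
  show ?thesis by (rule growth_inequality_lower_bound[OF m u_pos u_inc u_growth])
qed

lemma le_mult_of_forall_gt:
  fixes S c z :: real
  assumes "\<And>D. z < D \<Longrightarrow> S \<le> c * D"
  shows "S \<le> c * z"
proof (cases "c > 0")
  case True
  have "S / c \<le> z" using assms True by (intro dense_ge[of z "S / c"]) (simp add: divide_le_eq mult.commute)
  then show ?thesis using True by (simp add: divide_le_eq mult.commute)
next
  case False
  have "S \<le> c * (z + 1)" by (rule assms) simp
  also have "\<dots> \<le> c * z" using False by (simp add: algebra_simps)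
  finally show ?thesis .
qed

definition is_record :: "(nat \<Rightarrow> real) \<Rightarrow> (nat \<Rightarrow> nat) \<Rightarrow> nat \<Rightarrow> bool" where
  "is_record x r n \<longleftrightarrow> 1 \<le> n \<and> (\<forall>j\<in>{1..<n}. r j = r n \<longrightarrow> x j < x n)"

definition record_step :: "(nat \<Rightarrow> real) \<Rightarrow> (nat \<Rightarrow> nat) \<Rightarrow> nat \<Rightarrow> nat" where
  "record_step x r = enumerate {n. is_record x r n}"

context
  fixes m :: nat and x :: "nat \<Rightarrow> real" and r :: "nat \<Rightarrow> nat"
  assumes valid: "valid_strategy m x r"
begin

lemma find_step_is_record:
  assumes "\<rho> \<in> {1..m}"
  shows "is_record x r (find_step x r \<rho> D)"
  unfolding is_record_def
  using find_step_found[OF valid assms, of D] find_step_least[OF valid assms, of _ D] by fastforce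

lemma records_unbounded:
  assumes "\<rho> \<in> {1..m}"
  shows "\<exists>j\<ge>N. is_record x r j \<and> r j = \<rho> \<and> V \<le> x j"
proof -
  define D where "D = Max (insert V (x ` {..<N})) + 1"
  have "V \<le> D - 1" "\<And>i. i < N \<Longrightarrow> x i \<le> D - 1"
    unfolding D_def by simp_all
  then have D: "V < D" "\<And>i. i < N \<Longrightarrow> x i < D" by force+
  define j where "j = find_step x r \<rho> D"
  have "D \<le> x j" "r j = \<rho>" using find_step_found[OF valid assms] unfolding j_def by auto
  then have "N \<le> j" using D(2) by (meson leI not_less)
  then show ?thesis
    using find_step_is_record[OF assms] \<open>D \<le> x j\<close> \<open>r j = \<rho>\<close> D(1) unfolding j_def by force
qed

lemma valid_rays_nonempty: "m \<ge> 1"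
  using valid_strategyD[OF valid, of 1] by simp

lemma infinite_records: "infinite {n. is_record x r n}"
  using records_unbounded[of 1] valid_rays_nonempty unfolding infinite_nat_iff_unbounded_le by auto

lemma range_record_step: "range (record_step x r) = {n. is_record x r n}"
  unfolding record_step_def by (rule range_enumerate[OF infinite_records])

lemma record_stepE:
  assumes "is_record x r j"
  obtains k where "record_step x r k = j"
  using assms range_record_step by (metis mem_Collect_eq rangeE)

lemma strict_mono_record_step: "strict_mono (record_step x r)"
  unfolding record_step_def by (rule strict_mono_enumerate[OF infinite_records])

lemma record_step_ge_1: "record_step x r k \<ge> 1"
  using range_record_step unfolding is_record_def by blast

lemma record_step_ray: "r (record_step x r k) \<in> {1..m}"
  using valid_strategyD[OF valid record_step_ge_1] by simp

lemma record_step_increasing: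
  assumes "k < k'" and "r (record_step x r k) = r (record_step x r k')"
  shows "x (record_step x r k) < x (record_step x r k')"
proof -
  have "is_record x r (record_step x r k')" using range_record_step by blast
  moreover have "record_step x r k \<in> {1..<record_step x r k'}"
    using assms(1) strict_mono_record_step record_step_ge_1 by (auto simp: strict_mono_less)
  ultimately show ?thesis using assms(2) unfolding is_record_def by blast
qed

lemma records_recurrent:
  assumes "\<rho> \<in> {1..m}"
  shows "\<exists>\<^sub>\<infinity>k. r (record_step x r k) = \<rho>"
  unfolding INFM_nat_le
proof
  fix N
  obtain j where j: "record_step x r N \<le> j" "is_record x r j" "r j = \<rho>"
    using records_unbounded[OF assms] by blast
  obtain k where "record_step x r k = j" using j(2) by (rule record_stepE)
  then show "\<exists>k\<ge>N. r (record_step x r k) = \<rho>"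
    using j strict_mono_record_step by (auto simp: strict_mono_less_eq)
qed

lemma eventually_record_ge: "eventually (\<lambda>k. V \<le> x (record_step x r k)) sequentially"
proof -
  have "eventually (\<lambda>k. r (record_step x r k) = \<rho> \<longrightarrow> V \<le> x (record_step x r k)) sequentially"
    if \<rho>: "\<rho> \<in> {1..m}" for \<rho>
  proof -
    obtain j where j: "is_record x r j" "r j = \<rho>" "V \<le> x j" using records_unbounded[OF \<rho>] by blast
    obtain k0 where k0: "record_step x r k0 = j" using j(1) by (rule record_stepE)
    have "V \<le> x (record_step x r k)" if "k \<ge> Suc k0" "r (record_step x r k) = \<rho>" for k
    proof -
      have "x (record_step x r k0) < x (record_step x r k)"
        using that j(2) k0 by (intro record_step_increasing) auto
      then show ?thesis using j(3) k0 by simp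
    qed
    then show ?thesis unfolding eventually_sequentially by blast
  qed
  then have "eventually (\<lambda>k. \<forall>\<rho>\<in>{1..m}. r (record_step x r k) = \<rho> \<longrightarrow> V \<le> x (record_step x r k)) sequentially"
    by (intro eventually_ball_finite) auto
  then show ?thesis
    by (rule eventually_mono) (use record_step_ray in fast)
qed

end

text \<open>A target just beyond the \<open>k\<close>-th record is found at a later record on the same ray,
  hence not before the next one.\<close>

lemma record_cost_bound:
  fixes x :: "nat \<Rightarrow> real" and t lam C :: real
  assumes valid: "valid_strategy m x r" and t: "t \<ge> 0"
    and bound: "\<And>\<rho> D. \<rho> \<in> {1..m} \<Longrightarrow> lam \<le> D \<Longrightarrow> search_cost t x r \<rho> D \<le> C * D"
    and large: "lam \<le> x (record_step x r k)"
  shows "2 * (\<Sum>l<next_occ (\<lambda>k. r (record_step x r k)) k. x (record_step x r l))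
           \<le> (C - 1) * x (record_step x r k)"
proof (rule le_mult_of_forall_gt)
  define e where "e = record_step x r"
  define c where "c k = r (e k)" for k
  fix D assume D: "x (record_step x r k) < D"
  define \<rho> where "\<rho> = c k"
  have \<rho>: "\<rho> \<in> {1..m}" unfolding \<rho>_def c_def e_def by (rule record_step_ray[OF valid])
  define j where "j = find_step x r \<rho> D"
  obtain k' where k': "e k' = j"
    using find_step_is_record[OF valid \<rho>] unfolding e_def j_def by (rule record_stepE[OF valid])
  have found: "D \<le> x j" "r j = \<rho>" using find_step_found[OF valid \<rho>] unfolding j_def by auto
  have "k < k'"
  proof (rule ccontr)
    assume "\<not> k < k'"
    moreover have "k' \<noteq> k" using found D k' unfolding e_def by auto
    ultimately have "x (e k') < x (e k)"
      using found k' unfolding e_def \<rho>_def c_def by (intro record_step_increasing[OF valid]) auto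
    then show False using found D k' unfolding e_def by simp
  qed
  then have next_le: "next_occ c k \<le> k'"
    unfolding next_occ_def using found k' by (intro Least_le) (simp add: c_def \<rho>_def)
  have pos: "x (e l) > 0" for l using valid_strategyD(1)[OF valid record_step_ge_1[OF valid]] unfolding e_def .
  have "2 * (\<Sum>l<next_occ c k. x (e l)) \<le> (\<Sum>l<k'. 2 * x (e l))"
    using next_le pos by (simp add: sum_distrib_left[symmetric] sum_mono2 less_imp_le)
  also have "\<dots> = (\<Sum>i\<in>e ` {..<k'}. 2 * x i)"
    using strict_mono_record_step[OF valid] unfolding e_def
    by (simp add: sum.reindex strict_mono_imp_inj_on)
  also have "\<dots> \<le> (\<Sum>i\<in>{1..<j}. 2 * x i + t)"
  proof (rule order_trans[OF sum_mono sum_mono2])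
    show "e ` {..<k'} \<subseteq> {1..<j}"
      using strict_mono_record_step[OF valid] record_step_ge_1[OF valid] k'
      unfolding e_def by (auto simp: strict_mono_less)
    show "0 \<le> 2 * x i + t" if "i \<in> {1..<j} - e ` {..<k'}" for i
      using valid_strategyD(1)[OF valid, of i] that t by simp
  qed (use t in auto)
  also have "\<dots> = search_cost t x r \<rho> D - D" unfolding search_cost_def j_def by simp
  also have "\<dots> \<le> C * D - D" using bound[OF \<rho>] large D by simp
  finally show "2 * (\<Sum>l<next_occ (\<lambda>k. r (record_step x r k)) k. x (record_step x r l)) \<le> (C - 1) * D"
    unfolding c_def e_def by (simp add: algebra_simps)
qed

lemma comp_ratio_lower_bound:
  fixes x :: "nat \<Rightarrow> real" and t lam :: real
  assumes m: "m \<ge> 2" and lam: "lam > 0" and t: "t \<ge> 0" and valid: "valid_strategy m x r"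
  shows "ereal (1 + 2 * (real m * (real m / (real m - 1)) ^ (m - 1))) \<le> comp_ratio m t lam x r"
proof -
  have le_ratio: "ereal (search_cost t x r \<rho> D / D) \<le> comp_ratio m t lam x r"
    if "\<rho> \<in> {1..m}" "lam \<le> D" for \<rho> D
    unfolding comp_ratio_def using that by (intro SUP_upper2[of "(\<rho>, D)"]) auto
  show ?thesis
  proof (cases "comp_ratio m t lam x r")
    case (real C)
    have bound: "search_cost t x r \<rho> D \<le> C * D" if "\<rho> \<in> {1..m}" "lam \<le> D" for \<rho> D
    proof -
      have "search_cost t x r \<rho> D / D \<le> C" using le_ratio[OF that] real by simp
      then show ?thesis using lam that(2) by (simp add: divide_le_eq)
    qed
    have pointwise: "(\<Sum>l<next_occ (\<lambda>k. r (record_step x r k)) k. x (record_step x r l))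
        \<le> (C - 1) / 2 * x (record_step x r k)" if "lam \<le> x (record_step x r k)" for k
      using record_cost_bound[OF valid t bound that] by (simp add: field_simps)
    have ev: "eventually (\<lambda>k. (\<Sum>l<next_occ (\<lambda>k. r (record_step x r k)) k. x (record_step x r l))
        \<le> (C - 1) / 2 * x (record_step x r k)) sequentially"
      using eventually_record_ge[OF valid, of lam] by (rule eventually_mono) (rule pointwise)
    have card: "card {1..m} = m" by simp
    have "real m * (real m / (real m - 1)) ^ (m - 1) \<le> (C - 1) / 2"
      by (rule partial_sums_next_occ_lower_bound[OF card m record_step_ray[OF valid]
          records_recurrent[OF valid] valid_strategyD(1)[OF valid record_step_ge_1[OF valid]] ev])
    then show ?thesis using real by simp
  next
    case MInf
    then show ?thesis using le_ratio[of 1 lam] m by simp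
  qed simp
qed

lemma cyclic_strategy_optimal_small_turn_cost:
  fixes m :: nat and t lam s :: real
  assumes m: "m \<ge> 2" and t: "t \<ge> 0" and lam: "lam > 0" and s: "s = t / (2 * lam)"
    and small: "s \<le> 1 / ((real m / (real m - 1)) ^ (m - 1) - 1)"
  shows "let x = (\<lambda>i::nat. ((1 / (real m - 1) * (1 - ((real m / (real m - 1)) ^ (m - 1) - 1) * s) * real i
                          + (1 + s)) * (real m / (real m - 1)) ^ i - s) * lam)
       in valid_strategy m x (cyclic_rays m) \<and>
          optimal_strategy m t lam x (cyclic_rays m) \<and>
          comp_ratio m t lam x (cyclic_rays m) =
            ereal (1 + 2 * real m ^ m / (real m - 1) ^ (m - 1))"
proof -
  define q where "q = real m / (real m - 1)"
  define \<alpha> where "\<alpha> = 1 / (real m - 1) * (1 - (q ^ (m - 1) - 1) * s)"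
  have t_eq: "t = 2 * s * lam" and s0: "s \<ge> 0" using s t lam by simp_all
  have "q ^ (m - 1) > 1" unfolding q_def using m by (intro one_less_power) simp_all
  then have "(q ^ (m - 1) - 1) * s \<le> 1" using small[folded q_def] by (simp add: le_divide_eq mult.commute)
  then have \<alpha>: "\<alpha> \<ge> 0" "\<alpha> * (real m - 1) = 1 - (q ^ (m - 1) - 1) * s"
    unfolding \<alpha>_def using m by simp_all
  have ratio: "real m * q ^ (m - 1) = real m ^ m / (real m - 1) ^ (m - 1)"
    unfolding q_def power_divide using power_minus_mult[of m "real m"] m by (simp add: mult.commute)
  note strategy = cyclic_linear_geometric_strategy[OF m lam s0 \<alpha>[unfolded q_def]]
  show ?thesis
    unfolding Let_def optimal_strategy_def t_eq
    using strategy comp_ratio_lower_bound[OF m lam, of "2 * s * lam"] s0 lam ratio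
    unfolding \<alpha>_def q_def by (simp add: mult.assoc)
qed

lemma cyclic_strategy_large_turn_cost:
  fixes m :: nat and t lam s :: real
  assumes m: "m \<ge> 2" and lam: "lam > 0" and s: "s = t / (2 * lam)"
    and large: "s \<ge> 1 / ((real m / (real m - 1)) ^ (m - 1) - 1)"
  shows "let x = (\<lambda>i::nat. ((1 + s) * (1 + 1 / s) powr (real i / (real m - 1)) - s) * lam)
       in valid_strategy m x (cyclic_rays m) \<and>
          comp_ratio m t lam x (cyclic_rays m) =
            ereal (((1 + 1 / s) powr (- 1 / (real m - 1)) - (3 + 2 / s))
                   / ((1 + 1 / s) powr (- 1 / (real m - 1)) - 1))"
proof -
  define c where "c = 1 + 1 / s"
  define b where "b = c powr (1 / (real m - 1))"
  have "(real m / (real m - 1)) ^ (m - 1) > 1" using m by (intro one_less_power) simp_all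
  then have s0: "s > 0" using large by (meson divide_pos_pos diff_gt_0_iff_gt less_le_trans zero_less_one)
  have t_eq: "t = 2 * s * lam" using s lam by simp
  have c: "c > 1" unfolding c_def using s0 by simp
  have b: "b > 1" unfolding b_def using c m by (intro gr_one_powr) simp_all
  have b_pow: "b ^ i = c powr (real i / (real m - 1))" for i
    unfolding b_def using c by (simp add: powr_realpow[symmetric] powr_powr)
  have "b ^ (m - 1) = c" unfolding b_pow using m c by simp
  note strategy = cyclic_geometric_strategy[OF m lam s0 b this[unfolded c_def]]
  have b_pow_m: "b ^ m = b * c" using \<open>b ^ (m - 1) = c\<close> power_minus_mult[of m b] m by (simp add: mult.commute)
  have c_powr: "c powr (- 1 / (real m - 1)) = 1 / b"
    unfolding b_def by (simp add: powr_minus_divide[symmetric])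
  have ratio: "(c powr (- 1 / (real m - 1)) - (3 + 2 / s)) / (c powr (- 1 / (real m - 1)) - 1)
      = 1 + 2 * b ^ m / (b - 1)"
    unfolding c_powr b_pow_m unfolding c_def using b s0 by (simp add: field_simps)
  show ?thesis
    unfolding Let_def t_eq ratio[unfolded c_def] b_pow[unfolded c_def, symmetric]
    using strategy by simp
qed

theorem theorem6:
  fixes m :: nat and t lam s :: real
  assumes "m \<ge> 2" and "t \<ge> 0" and "lam > 0" and "s = t / (2 * lam)"
  shows
   "(s \<le> 1 / ((real m / (real m - 1)) ^ (m - 1) - 1) \<longrightarrow>
      (let x = (\<lambda>i::nat. ((1 / (real m - 1) * (1 - ((real m / (real m - 1)) ^ (m - 1) - 1) * s) * real i
                          + (1 + s)) * (real m / (real m - 1)) ^ i - s) * lam)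
       in valid_strategy m x (cyclic_rays m) \<and>
          optimal_strategy m t lam x (cyclic_rays m) \<and>
          comp_ratio m t lam x (cyclic_rays m) =
            ereal (1 + 2 * real m ^ m / (real m - 1) ^ (m - 1))))
    \<and>
    (s \<ge> 1 / ((real m / (real m - 1)) ^ (m - 1) - 1) \<longrightarrow>
      (let x = (\<lambda>i::nat. ((1 + s) * (1 + 1 / s) powr (real i / (real m - 1)) - s) * lam)
       in valid_strategy m x (cyclic_rays m) \<and>
          comp_ratio m t lam x (cyclic_rays m) =
            ereal (((1 + 1 / s) powr (- 1 / (real m - 1)) - (3 + 2 / s))
                   / ((1 + 1 / s) powr (- 1 / (real m - 1)) - 1))))"
  using cyclic_strategy_optimal_small_turn_cost[OF assms] cyclic_strategy_large_turn_cost[OF assms(1,3,4)]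
  by blast

end
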